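(* Let $K$ be a field containing $\mathbb{Q}$ such that every element of $K$ is algebraic over $\mathbb{Q}$. Then $\widetilde{K}=\{x\in K: \sigma(x)=x \text{ for every field automorphism } \sigma \text{ of } K\}$.
   Context: Let $K$ be a field. For $r\in K$, a finite set $A(r)$ with $\{r\}\subseteq A(r)\subseteq K$ is called adequate for $r$ if every mapping $f:A(r)\to K$ satisfying (1) if $1\in A(r)$ then $f(1)=1$; (2) if $a,b\in A(r)$ and $a+b\in A(r)$ then $f(a+b)=f(a)+f(b)$; (3) if $a,b\in A(r)$ and $a\cdot b\in A(r)$ then $f(a\cdot b)=f(a)\cdot f(b)$, also satisfies $f(r)=r$. $\widetilde{K}$ denotes the set of all $r\in K$ for which some finite set adequate for $r$ exists. *)

theory Defs
  imports "HOL-Computational_Algebra.Polynomial"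
begin

definition adequate :: "'a::field set \<Rightarrow> 'a \<Rightarrow> bool" where
  "adequate A r \<longleftrightarrow> finite A \<and> r \<in> A \<and>
     (\<forall>f :: 'a \<Rightarrow> 'a.
        (1 \<in> A \<longrightarrow> f 1 = 1) \<and>
        (\<forall>a\<in>A. \<forall>b\<in>A. a + b \<in> A \<longrightarrow> f (a + b) = f a + f b) \<and>
        (\<forall>a\<in>A. \<forall>b\<in>A. a * b \<in> A \<longrightarrow> f (a * b) = f a * f b)
        \<longrightarrow> f r = r)"

definition Ktilde :: "'a::field set" where
  "Ktilde = {r. \<exists>A. adequate A r}"

definition field_automorphism :: "('a::field \<Rightarrow> 'a) \<Rightarrow> bool" where
  "field_automorphism \<sigma> \<longleftrightarrow> bij \<sigma> \<and> \<sigma> 1 = 1 \<and>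
     (\<forall>x y. \<sigma> (x + y) = \<sigma> x + \<sigma> y) \<and> (\<forall>x y. \<sigma> (x * y) = \<sigma> x * \<sigma> y)"

end

theory Submission
  imports Defs "HOL-Analysis.Analysis"
begin

text \<open>An automorphism restricts to a map satisfying (1)--(3) on any finite set, so elements of
  \<open>Ktilde\<close> are fixed by all automorphisms. Conversely, suppose every finite set containing \<open>x\<close>
  carries such a partial homomorphism moving \<open>x\<close>. As \<open>K\<close> is algebraic, each \<open>k\<close> is a root of a
  nonzero integer polynomial, and a suitable finite set forces any partial homomorphism to map \<open>k\<close>
  into the finite root set \<open>R k\<close>. The partial homomorphisms may therefore be taken in the
  product of the finite discrete spaces \<open>R k\<close>, which is compact by Tychonoff, and they glue to a
  ring endomorphism moving \<open>x\<close>. It is injective, and it maps each finite set \<open>R k\<close> into itself,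
  hence onto itself; so it is an automorphism not fixing \<open>x\<close>.\<close>

definition partial_hom :: "'a::{one,plus,times} set \<Rightarrow> ('a \<Rightarrow> 'a) \<Rightarrow> bool" where
  "partial_hom A f \<longleftrightarrow> (1 \<in> A \<longrightarrow> f 1 = 1) \<and>
     (\<forall>a\<in>A. \<forall>b\<in>A. a + b \<in> A \<longrightarrow> f (a + b) = f a + f b) \<and>
     (\<forall>a\<in>A. \<forall>b\<in>A. a * b \<in> A \<longrightarrow> f (a * b) = f a * f b)"

lemma adequate_iff_partial_hom:
  "adequate A r \<longleftrightarrow> finite A \<and> r \<in> A \<and> (\<forall>f. partial_hom A f \<longrightarrow> f r = r)"
  unfolding adequate_def partial_hom_def by blast

lemma partial_hom_subset: "partial_hom B f \<Longrightarrow> A \<subseteq> B \<Longrightarrow> partial_hom A f"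
  unfolding partial_hom_def by blast

lemma partial_hom_cong: "partial_hom A f \<Longrightarrow> (\<And>a. a \<in> A \<Longrightarrow> g a = f a) \<Longrightarrow> partial_hom A g"
  unfolding partial_hom_def by auto

lemma partial_hom_add:
  "partial_hom A f \<Longrightarrow> a \<in> A \<Longrightarrow> b \<in> A \<Longrightarrow> a + b \<in> A \<Longrightarrow> f (a + b) = f a + f b"
  unfolding partial_hom_def by blast

lemma partial_hom_mult:
  "partial_hom A f \<Longrightarrow> a \<in> A \<Longrightarrow> b \<in> A \<Longrightarrow> a * b \<in> A \<Longrightarrow> f (a * b) = f a * f b"
  unfolding partial_hom_def by blast

lemma partial_hom_UNIV_iff:
  "partial_hom UNIV f \<longleftrightarrow> f 1 = 1 \<and> (\<forall>a b. f (a + b) = f a + f b) \<and> (\<forall>a b. f (a * b) = f a * f b)"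
  unfolding partial_hom_def by blast

lemma partial_hom_UNIV_if_finite:
  assumes "\<And>S. finite S \<Longrightarrow> partial_hom S f"
  shows "partial_hom UNIV f"
  unfolding partial_hom_UNIV_iff
proof (intro conjI allI)
  show "f 1 = 1" using assms[of "{1}"] unfolding partial_hom_def by simp
  show "f (a + b) = f a + f b" for a b using assms[of "{a, b, a + b}"] unfolding partial_hom_def by simp
  show "f (a * b) = f a * f b" for a b using assms[of "{a, b, a * b}"] unfolding partial_hom_def by simp
qed

lemma field_automorphism_iff: "field_automorphism \<sigma> \<longleftrightarrow> bij \<sigma> \<and> partial_hom UNIV \<sigma>"
  unfolding field_automorphism_def partial_hom_UNIV_iff by blast

lemma partial_hom_zero:
  "partial_hom A f \<Longrightarrow> 0 \<in> A \<Longrightarrow> f 0 = (0 :: 'a :: ring_1)"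
  unfolding partial_hom_def by (metis add.right_neutral add_left_cancel)

lemma partial_hom_of_nat:
  assumes f: "partial_hom A f" and A: "1 \<in> A" "of_nat ` {..n} \<subseteq> A" and "m \<le> n"
  shows "f (of_nat m) = (of_nat m :: 'a :: ring_1)"
  using \<open>m \<le> n\<close>
proof (induction m)
  case 0
  show ?case using partial_hom_zero[OF f] A by force
next
  case (Suc m)
  have "of_nat m \<in> A" "1 + of_nat m \<in> A"
    using A(2) Suc.prems by (auto simp flip: of_nat_Suc)
  then have "f (1 + of_nat m) = f 1 + f (of_nat m)"
    using partial_hom_add[OF f A(1)] by blast
  then show ?case
    using Suc f A(1) unfolding partial_hom_def by simp
qed

lemma partial_hom_of_int:
  assumes f: "partial_hom A f" and A: "1 \<in> A" "of_nat ` {..nat \<bar>c\<bar>} \<subseteq> A" "of_int c \<in> A"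
  shows "f (of_int c) = (of_int c :: 'a :: ring_1)"
proof -
  define n where "n = nat \<bar>c\<bar>"
  have n: "f (of_nat n) = of_nat n" "of_nat n \<in> A"
    using partial_hom_of_nat[OF f A(1,2), of n] A(2) unfolding n_def by auto
  show ?thesis
  proof (cases "c \<ge> 0")
    case True
    then show ?thesis using n(1) unfolding n_def by simp
  next
    case False
    then have sum_zero: "of_int c + of_nat n = (0 :: 'a)"
      unfolding n_def by simp
    moreover have "0 \<in> A" using A(2) by force
    ultimately have "f (of_int c) + f (of_nat n) = 0"
      using partial_hom_add[OF f A(3) n(2)] partial_hom_zero[OF f] by simp
    then show ?thesis using n(1) sum_zero by (metis add_right_cancel)
  qed
qed

lemma finite_set_forces_poly_eval:
  fixes k :: "'a :: comm_ring_1"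
  shows "\<exists>A. finite A \<and> k \<in> A \<and> poly (map_poly of_int p) k \<in> A \<and>
    (\<forall>f. partial_hom A f \<longrightarrow> f (poly (map_poly of_int p) k) = poly (map_poly of_int p) (f k))"
proof (induction p rule: pCons_induct)
  case 0
  show ?case by (rule exI[of _ "{0, k}"]) (auto intro: partial_hom_zero)
next
  case (pCons c p)
  let ?y = "poly (map_poly of_int p) k"
  obtain A where A: "finite A" "k \<in> A" "?y \<in> A"
    "\<And>f. partial_hom A f \<Longrightarrow> f ?y = poly (map_poly of_int p) (f k)"
    using pCons.IH by blast
  define B where "B = A \<union> insert 1 (of_nat ` {..nat \<bar>c\<bar>}) \<union> {of_int c, k * ?y, of_int c + k * ?y}"
  have eval: "poly (map_poly of_int (pCons c p)) z = of_int c + z * poly (map_poly of_int p) z" for z :: 'a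
    by (simp add: map_poly_pCons)
  have mem: "k \<in> B" "?y \<in> B" "of_int c \<in> B" "k * ?y \<in> B" "of_int c + k * ?y \<in> B"
    using A unfolding B_def by simp_all
  show ?case
  proof (intro exI conjI allI impI)
    show "finite B" using A unfolding B_def by simp
    show "k \<in> B" "poly (map_poly of_int (pCons c p)) k \<in> B"
      using mem unfolding eval by simp_all
    fix f assume f: "partial_hom B f"
    have "f (of_int c + k * ?y) = f (of_int c) + f k * f ?y"
      using partial_hom_add[OF f] partial_hom_mult[OF f] mem by simp
    moreover have "f (of_int c) = of_int c"
      by (rule partial_hom_of_int[OF f]) (auto simp: B_def)
    moreover have "f ?y = poly (map_poly of_int p) (f k)"
      by (rule A(4), rule partial_hom_subset[OF f]) (auto simp: B_def)
    ultimately show "f (poly (map_poly of_int (pCons c p)) k) = poly (map_poly of_int (pCons c p)) (f k)"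
      unfolding eval by simp
  qed
qed

lemma finite_set_forces_root:
  fixes k :: "'a :: comm_ring_1"
  obtains A where "finite A"
    "\<And>f. partial_hom A f \<Longrightarrow> poly (map_poly of_int p) k = 0 \<Longrightarrow> poly (map_poly of_int p) (f k) = 0"
proof -
  obtain A where A: "finite A" "k \<in> A" "poly (map_poly of_int p) k \<in> A"
    "\<And>f. partial_hom A f \<Longrightarrow> f (poly (map_poly of_int p) k) = poly (map_poly of_int p) (f k)"
    using finite_set_forces_poly_eval by blast
  show ?thesis
    by (rule that[OF A(1)]) (metis A(3,4) partial_hom_zero)
qed

lemma Ktilde_subset_fixed_field:
  "(Ktilde :: 'a :: field set) \<subseteq> {x. \<forall>\<sigma>. field_automorphism \<sigma> \<longrightarrow> \<sigma> x = x}"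
proof (intro subsetI CollectI allI impI)
  fix r :: 'a and \<sigma> :: "'a \<Rightarrow> 'a"
  assume "r \<in> Ktilde" and "field_automorphism \<sigma>"
  then obtain A where "adequate A r" unfolding Ktilde_def by blast
  moreover have "partial_hom A \<sigma>"
    using \<open>field_automorphism \<sigma>\<close> partial_hom_subset unfolding field_automorphism_iff by blast
  ultimately show "\<sigma> r = r" unfolding adequate_iff_partial_hom by blast
qed

lemma partial_hom_UNIV_imp_inj:
  fixes f :: "'a :: field \<Rightarrow> 'a"
  assumes "partial_hom UNIV f"
  shows "inj f"
proof (rule injI)
  fix a b assume "f a = f b"
  have hom: "f 1 = 1" "\<And>a b. f (a + b) = f a + f b" "\<And>a b. f (a * b) = f a * f b"
    using assms unfolding partial_hom_UNIV_iff by blast+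
  have "f (a - b) = 0"
    using hom(2)[of "a - b" b] \<open>f a = f b\<close> by simp
  show "a = b"
  proof (rule ccontr)
    assume "a \<noteq> b"
    then have "1 = f ((a - b) * inverse (a - b))"
      using hom(1) by simp
    also have "\<dots> = 0"
      using hom(3) \<open>f (a - b) = 0\<close> by simp
    finally show False by simp
  qed
qed

lemma algebraic_root_sets:
  assumes "\<forall>x :: 'a :: field_char_0. algebraic x"
  obtains R :: "'a :: field_char_0 \<Rightarrow> 'a set" where "\<And>k. finite (R k)" "\<And>k. k \<in> R k"
    "\<And>k z. z \<in> R k \<Longrightarrow> \<exists>A. finite A \<and> (\<forall>f. partial_hom A f \<longrightarrow> f z \<in> R k)"
proof -
  have "\<exists>p. p \<noteq> 0 \<and> poly (map_poly of_int p) k = (0 :: 'a)" for k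
    using assms by (auto elim: algebraicE')
  then obtain P where P: "\<And>k. P k \<noteq> 0" "\<And>k. poly (map_poly of_int (P k)) k = (0 :: 'a)"
    by metis
  define R where "R k = {z :: 'a. poly (map_poly of_int (P k)) z = 0}" for k :: 'a
  show ?thesis
  proof (rule that[of R])
    show "finite (R k)" for k
      unfolding R_def by (rule poly_roots_finite) (use P(1) in \<open>simp add: map_poly_eq_0_iff\<close>)
    show "k \<in> R k" for k
      using P(2) unfolding R_def by simp
    fix k z assume "z \<in> R k"
    moreover obtain A where "finite A"
      "\<And>f. partial_hom A f \<Longrightarrow> poly (map_poly of_int (P k)) z = 0 \<Longrightarrow>
        poly (map_poly of_int (P k)) (f z) = 0"
      using finite_set_forces_root[where k = z and p = "P k"] by blast
    ultimately show "\<exists>A. finite A \<and> (\<forall>f. partial_hom A f \<longrightarrow> f z \<in> R k)"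
      unfolding R_def by blast
  qed
qed

lemma partial_hom_UNIV_imp_surj:
  fixes f :: "'a :: field_char_0 \<Rightarrow> 'a"
  assumes "\<forall>x :: 'a. algebraic x" and f: "partial_hom UNIV f"
  shows "surj f"
proof -
  obtain R :: "'a \<Rightarrow> 'a set" where R: "\<And>k. finite (R k)" "\<And>k. k \<in> R k"
    "\<And>k z. z \<in> R k \<Longrightarrow> \<exists>A. finite A \<and> (\<forall>f. partial_hom A f \<longrightarrow> f z \<in> R k)"
    using algebraic_root_sets[OF assms(1)] by blast
  have "y \<in> range f" for y
  proof -
    have "f ` R y \<subseteq> R y"
      using R(3) partial_hom_subset[OF f] by blast
    moreover have "inj_on f (R y)"
      using partial_hom_UNIV_imp_inj[OF f] by (rule inj_on_subset) simp
    ultimately have "f ` R y = R y"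
      by (rule endo_inj_surj[OF R(1)])
    then show "y \<in> range f" using R(2) by blast
  qed
  then show ?thesis by blast
qed

lemma openin_product_discrete_finitely_determined:
  assumes "finite J" and "\<And>g h. \<forall>j\<in>J. g j = h j \<Longrightarrow> Q g \<longleftrightarrow> Q h"
  shows "openin (product_topology (\<lambda>i. discrete_topology (R i)) UNIV)
    {g \<in> topspace (product_topology (\<lambda>i. discrete_topology (R i)) UNIV). Q g}"
    (is "openin ?T ?S")
proof (subst openin_subopen, intro ballI)
  fix g assume g: "g \<in> ?S"
  then have gR: "g i \<in> R i" for i by (simp add: PiE_iff)
  define N where "N = PiE UNIV (\<lambda>i. if i \<in> J then {g i} else R i)"
  have "finite {i. (if i \<in> J then {g i} else R i) \<noteq> R i}"
    by (rule finite_subset[OF _ \<open>finite J\<close>]) auto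
  then have "openin ?T N"
    using gR unfolding N_def openin_PiE_gen by auto
  moreover have "g \<in> N"
    using gR unfolding N_def by (simp add: PiE_iff)
  moreover have "N \<subseteq> ?S"
  proof
    fix h assume "h \<in> N"
    then have h: "h i \<in> (if i \<in> J then {g i} else R i)" for i
      unfolding N_def PiE_iff by blast
    then have "\<forall>j\<in>J. g j = h j"
      by (metis singletonD)
    moreover have "h i \<in> R i" for i
      using h[of i] gR[of i] by (auto split: if_splits)
    ultimately show "h \<in> ?S"
      using g assms(2)[of g h] by (simp add: PiE_iff)
  qed
  ultimately show "\<exists>N. openin ?T N \<and> g \<in> N \<and> N \<subseteq> ?S" by blast
qed

text \<open>Compactness of the product of the finite discrete spaces \<open>R i\<close>.\<close>

lemma finitely_satisfiable_imp_satisfiable: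
  fixes R :: "'i \<Rightarrow> 'b set" and Q :: "'c \<Rightarrow> ('i \<Rightarrow> 'b) \<Rightarrow> bool"
  assumes finite: "\<And>i. finite (R i)"
    and local: "\<And>c. c \<in> C \<Longrightarrow> \<exists>J. finite J \<and> (\<forall>g h. (\<forall>j\<in>J. g j = h j) \<longrightarrow> Q c g = Q c h)"
    and sat: "\<And>F. finite F \<Longrightarrow> F \<subseteq> C \<Longrightarrow> \<exists>g. (\<forall>i. g i \<in> R i) \<and> (\<forall>c\<in>F. Q c g)"
  shows "\<exists>g. (\<forall>i. g i \<in> R i) \<and> (\<forall>c\<in>C. Q c g)"
proof -
  define T where "T = product_topology (\<lambda>i. discrete_topology (R i)) UNIV"
  define cyl where "cyl c = {g \<in> topspace T. Q c g}" for c
  have topspace: "topspace T = {g. \<forall>i. g i \<in> R i}"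
    unfolding T_def by (auto simp: PiE_def)
  have "compact_space T"
    unfolding T_def using finite by (simp add: compact_space_product_topology compact_space_discrete_topology)
  have closed_cyl: "closedin T (cyl c)" if c: "c \<in> C" for c
  proof -
    obtain J where J: "finite J" "\<And>g h. \<forall>j\<in>J. g j = h j \<Longrightarrow> Q c g = Q c h"
      using local[OF c] by blast
    have "openin T {g \<in> topspace T. \<not> Q c g}"
      unfolding T_def by (rule openin_product_discrete_finitely_determined[OF J(1)]) (use J(2) in blast)
    moreover have "topspace T - cyl c = {g \<in> topspace T. \<not> Q c g}"
      unfolding cyl_def by blast
    ultimately show ?thesis
      unfolding closedin_def cyl_def by auto
  qed
  define U where "U = insert (topspace T) (cyl ` C)"
  have closed: "\<forall>X\<in>U. closedin T X"
    unfolding U_def using closed_cyl by blast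
  have fip: "\<Inter>F \<noteq> {}" if "finite F" "F \<subseteq> U" for F
  proof -
    have "finite (F - {topspace T})" "F - {topspace T} \<subseteq> cyl ` C"
      using that unfolding U_def by auto
    then obtain F' where F': "F' \<subseteq> C" "finite F'" "F - {topspace T} = cyl ` F'"
      using finite_subset_image by metis
    obtain g where g: "g \<in> topspace T" "\<forall>c\<in>F'. Q c g"
      using sat[OF F'(2,1)] unfolding topspace by blast
    have "g \<in> X" if "X \<in> F" for X
    proof (cases "X = topspace T")
      case True
      then show ?thesis using g(1) by simp
    next
      case False
      then have "X \<in> cyl ` F'"
        using F'(3) that by blast
      then obtain c where "c \<in> F'" "X = cyl c"
        by blast
      then show ?thesis using g unfolding cyl_def by simp
    qed
    then show ?thesis by blast
  qed
  have "\<Inter>U \<noteq> {}"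
    by (rule compact_space_fip[THEN iffD1, OF \<open>compact_space T\<close>, rule_format])
      (use closed fip in auto)
  then obtain g where g: "g \<in> \<Inter>U"
    by blast
  then have "g \<in> topspace T"
    unfolding U_def by blast
  moreover have "Q c g" if "c \<in> C" for c
    using g that unfolding U_def cyl_def by blast
  ultimately show ?thesis
    unfolding topspace by blast
qed

lemma confined_moving_partial_hom:
  assumes R: "\<And>k. k \<in> R k" "\<And>k. \<exists>H. finite H \<and> (\<forall>f. partial_hom H f \<longrightarrow> f k \<in> R k)"
    and moved: "\<And>A. finite A \<Longrightarrow> x \<in> A \<Longrightarrow> \<exists>f. partial_hom A f \<and> f x \<noteq> x"
    and "finite A"
  shows "\<exists>g. (\<forall>k. g k \<in> R k) \<and> partial_hom A g \<and> g x \<noteq> x"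
proof -
  obtain H where H: "\<And>k. finite (H k)" "\<And>k f. partial_hom (H k) f \<Longrightarrow> f k \<in> R k"
    using R(2) by metis
  define A' where "A' = insert x A"
  have "finite (A' \<union> \<Union>(H ` A'))"
    using \<open>finite A\<close> H(1) unfolding A'_def by simp
  moreover have "x \<in> A' \<union> \<Union>(H ` A')"
    unfolding A'_def by simp
  ultimately obtain f where f: "partial_hom (A' \<union> \<Union>(H ` A')) f" "f x \<noteq> x"
    using moved by blast
  define g where "g k = (if k \<in> A' then f k else k)" for k
  have "g k \<in> R k" for k
  proof (cases "k \<in> A'")
    case True
    then have "partial_hom (H k) f"
      by (intro partial_hom_subset[OF f(1)]) blast
    then show ?thesis using True H(2) unfolding g_def by simp
  next
    case False
    then show ?thesis using R(1) unfolding g_def by simp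
  qed
  moreover have "partial_hom A g"
    by (rule partial_hom_cong[OF partial_hom_subset[OF f(1)]]) (auto simp: A'_def g_def)
  moreover have "g x \<noteq> x"
    using f(2) unfolding g_def A'_def by simp
  ultimately show ?thesis by blast
qed

lemma moving_partial_homs_glue:
  fixes R :: "'a :: {one,plus,times} \<Rightarrow> 'a set" and x :: 'a
  assumes R: "\<And>k. finite (R k)" "\<And>k. k \<in> R k"
    "\<And>k. \<exists>H. finite H \<and> (\<forall>f. partial_hom H f \<longrightarrow> f k \<in> R k)"
    and moved: "\<And>A. finite A \<Longrightarrow> x \<in> A \<Longrightarrow> \<exists>f. partial_hom A f \<and> f x \<noteq> x"
  shows "\<exists>g. partial_hom UNIV g \<and> g x \<noteq> x"
proof -
  have "\<exists>g. (\<forall>k. g k \<in> R k) \<and> (\<forall>S\<in>{S. finite S}. partial_hom S g \<and> g x \<noteq> x)"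
  proof (rule finitely_satisfiable_imp_satisfiable[where Q = "\<lambda>S g. partial_hom S g \<and> g x \<noteq> x"])
    show "finite (R k)" for k
      by (rule R(1))
    show "\<exists>J. finite J \<and> (\<forall>g h. (\<forall>j\<in>J. g j = h j) \<longrightarrow>
        (partial_hom S g \<and> g x \<noteq> x) = (partial_hom S h \<and> h x \<noteq> x))" if "S \<in> {S. finite S}" for S
    proof (intro exI conjI allI impI)
      show "finite (insert x S)" using that by simp
      fix g h :: "'a \<Rightarrow> 'a" assume "\<forall>j\<in>insert x S. g j = h j"
      then show "(partial_hom S g \<and> g x \<noteq> x) = (partial_hom S h \<and> h x \<noteq> x)"
        using partial_hom_cong[of S g h] partial_hom_cong[of S h g] by auto
    qed
    show "\<exists>g. (\<forall>k. g k \<in> R k) \<and> (\<forall>S\<in>F. partial_hom S g \<and> g x \<noteq> x)"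
      if "finite F" "F \<subseteq> {S. finite S}" for F
    proof -
      have "finite (\<Union>F)" using that by auto
      then obtain g where "\<forall>k. g k \<in> R k" "partial_hom (\<Union>F) g" "g x \<noteq> x"
        using confined_moving_partial_hom[OF R(2,3) moved] by blast
      then show ?thesis
        by (intro exI[of _ g]) (auto intro: partial_hom_subset)
    qed
  qed
  then obtain g where g: "\<And>S. finite S \<Longrightarrow> partial_hom S g \<and> g x \<noteq> x"
    by blast
  have "partial_hom UNIV g"
    using g by (intro partial_hom_UNIV_if_finite) blast
  moreover have "g x \<noteq> x"
    using g[of "{}"] by simp
  ultimately show ?thesis by blast
qed

theorem theorem3:
  assumes "\<forall>x :: 'a :: field_char_0. algebraic x"
  shows "(Ktilde :: 'a set) = {x. \<forall>\<sigma>. field_automorphism \<sigma> \<longrightarrow> \<sigma> x = x}"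
proof (rule antisym[OF Ktilde_subset_fixed_field], rule subsetI, rule ccontr)
  fix x :: 'a
  assume fixed: "x \<in> {x. \<forall>\<sigma>. field_automorphism \<sigma> \<longrightarrow> \<sigma> x = x}" and "x \<notin> Ktilde"
  then have moved: "\<And>A. finite A \<Longrightarrow> x \<in> A \<Longrightarrow> \<exists>f. partial_hom A f \<and> f x \<noteq> x"
    unfolding Ktilde_def adequate_iff_partial_hom by blast
  obtain R :: "'a \<Rightarrow> 'a set" where R: "\<And>k. finite (R k)" "\<And>k. k \<in> R k"
    "\<And>k z. z \<in> R k \<Longrightarrow> \<exists>A. finite A \<and> (\<forall>f. partial_hom A f \<longrightarrow> f z \<in> R k)"
    using algebraic_root_sets[OF assms] by blast
  then obtain g where g: "partial_hom UNIV g" "g x \<noteq> x"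
    using moving_partial_homs_glue[of R x] moved by blast
  then have "field_automorphism g"
    using partial_hom_UNIV_imp_inj partial_hom_UNIV_imp_surj[OF assms]
    unfolding field_automorphism_iff bij_def by blast
  then show False using fixed g(2) by blast
qed

end
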